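(* Suppose $\beta_j\ne0$ for $j=2,3,\dots,k$ in the Lanczos process. Then the optimal value $\mu^{(k)}$ of rLGopt satisfies $\mu^{(k)}<\lambda_{\min}(T_k)$, and rLGopt cannot fall into the hard case.
   Context: Let $M\in\mathbb{R}^{n\times n}$ be symmetric (in the paper $M=PAP$) and $0\ne b_0\in\mathbb{R}^n$, $\gamma>0$. Lanczos process: $q_0=0$, $\beta_1=\|b_0\|$, $q_1=b_0/\|b_0\|$, for $j=1,2,\dots$: $\alpha_j=q_j^{\top}Mq_j$, $\widehat q_{j+1}=Mq_j-\alpha_jq_j-\beta_jq_{j-1}$, $\beta_{j+1}=\|\widehat q_{j+1}\|$, $q_{j+1}=\widehat q_{j+1}/\beta_{j+1}$ when $\beta_{j+1}>0$. $T_k$ is the $k\times k$ symmetric tridiagonal matrix with diagonal $\alpha_1,\dots,\alpha_k$ and off-diagonal entries $\beta_2,\dots,\beta_k$. rLGopt: minimize $\lambda$ over $(\lambda,x)\in\mathbb{R}\times\mathbb{R}^k$ with $(T_k-\lambda I)x=-\|b_0\|e_1$ and $\|x\|=\gamma$; $\mu^{(k)}$ is its optimal value. The associated rQEPmin: minimize $\lambda$ over $\lambda\in\mathbb{R}$, $0\ne w\in\mathbb{R}^k$ with $(T_k-\lambda I)^2w=\gamma^{-2}\|b_0\|^2e_1e_1^{\top}w$. rLGopt is said to be in the hard case if rQEPmin has a minimizer $(\lambda,w)$ with $e_1^{\top}w=0$. *)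

theory Defs
  imports "Jordan_Normal_Form.Char_Poly"
begin

definition vnorm :: "real vec \<Rightarrow> real" where
  "vnorm v = sqrt (v \<bullet> v)"

(* lanczos_state M b j = (q_j, q_{j+1}, beta_{j+1}), with q_0 = 0, q_1 = b/||b||, beta_1 = ||b|| *)
fun lanczos_state :: "real mat \<Rightarrow> real vec \<Rightarrow> nat \<Rightarrow> real vec \<times> real vec \<times> real" where
  "lanczos_state M b 0 = (0\<^sub>v (dim_vec b), (1 / vnorm b) \<cdot>\<^sub>v b, vnorm b)"
| "lanczos_state M b (Suc j) =
     (let (p, q, \<beta>) = lanczos_state M b j;
          \<alpha> = q \<bullet> (M *\<^sub>v q);
          h = M *\<^sub>v q - \<alpha> \<cdot>\<^sub>v q - \<beta> \<cdot>\<^sub>v p;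
          \<beta>' = vnorm h
      in (q, (1 / \<beta>') \<cdot>\<^sub>v h, \<beta>'))"

definition lanczos_q :: "real mat \<Rightarrow> real vec \<Rightarrow> nat \<Rightarrow> real vec" where
  "lanczos_q M b j = fst (lanczos_state M b j)"

definition lanczos_alpha :: "real mat \<Rightarrow> real vec \<Rightarrow> nat \<Rightarrow> real" where
  "lanczos_alpha M b j = lanczos_q M b j \<bullet> (M *\<^sub>v lanczos_q M b j)"

definition lanczos_beta :: "real mat \<Rightarrow> real vec \<Rightarrow> nat \<Rightarrow> real" where
  "lanczos_beta M b j = snd (snd (lanczos_state M b (j - 1)))"

(* T_k, k x k symmetric tridiagonal; 0-based entry (i,j) is the 1-based entry (i+1,j+1) *)
definition lanczos_T :: "real mat \<Rightarrow> real vec \<Rightarrow> nat \<Rightarrow> real mat" where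
  "lanczos_T M b k = mat k k (\<lambda>(i, j).
      if i = j then lanczos_alpha M b (i + 1)
      else if i = j + 1 then lanczos_beta M b (i + 1)
      else if j = i + 1 then lanczos_beta M b (j + 1)
      else 0)"

definition lambda_min :: "real mat \<Rightarrow> real" where
  "lambda_min A = Min {e. eigenvalue A e}"

definition rLGopt_feasible :: "real mat \<Rightarrow> real \<Rightarrow> real \<Rightarrow> real \<Rightarrow> real vec \<Rightarrow> bool" where
  "rLGopt_feasible T nb \<gamma> mu x \<longleftrightarrow>
     x \<in> carrier_vec (dim_row T) \<and>
     (T - mu \<cdot>\<^sub>m 1\<^sub>m (dim_row T)) *\<^sub>v x = - (nb \<cdot>\<^sub>v unit_vec (dim_row T) 0) \<and>
     vnorm x = \<gamma>"

definition rLGopt_value :: "real mat \<Rightarrow> real \<Rightarrow> real \<Rightarrow> real" where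
  "rLGopt_value T nb \<gamma> = Inf {mu. \<exists>x. rLGopt_feasible T nb \<gamma> mu x}"

definition rQEP_feasible :: "real mat \<Rightarrow> real \<Rightarrow> real \<Rightarrow> real \<Rightarrow> real vec \<Rightarrow> bool" where
  "rQEP_feasible T nb \<gamma> mu w \<longleftrightarrow>
     w \<in> carrier_vec (dim_row T) \<and> w \<noteq> 0\<^sub>v (dim_row T) \<and>
     ((T - mu \<cdot>\<^sub>m 1\<^sub>m (dim_row T)) ^\<^sub>m 2) *\<^sub>v w =
       (nb\<^sup>2 / \<gamma>\<^sup>2) \<cdot>\<^sub>v ((unit_vec (dim_row T) 0 \<bullet> w) \<cdot>\<^sub>v unit_vec (dim_row T) 0)"

definition rLGopt_hard_case :: "real mat \<Rightarrow> real \<Rightarrow> real \<Rightarrow> bool" where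
  "rLGopt_hard_case T nb \<gamma> \<longleftrightarrow>
     (\<exists>mu w. rQEP_feasible T nb \<gamma> mu w \<and>
            (\<forall>mu' w'. rQEP_feasible T nb \<gamma> mu' w' \<longrightarrow> mu \<le> mu') \<and>
            unit_vec (dim_row T) 0 \<bullet> w = 0)"

end

theory Submission
  imports Defs "Jordan_Normal_Form.Spectral_Radius"
begin

(* For mu below lambda_min(T_k) the system (T_k - mu I) x = -||b|| e_1 has a unique solution
   x(mu), and ||x(mu)|| depends continuously on mu.  It is small for very negative mu and
   unbounded as mu increases to lambda_min: the last component of x(mu) is ||b|| times the
   (1,k) cofactor of T_k - mu I divided by det (T_k - mu I), and that cofactor is, up to sign,
   the product of the nonzero subdiagonal entries beta_2 ... beta_k, independent of mu.  The
   intermediate value theorem gives a feasible mu < lambda_min.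
   In the hard case e_1' w = 0 would reduce the quadratic eigenvalue equation to
   (T_k - mu I)^2 w = 0, hence (T_k - mu I) w = 0 by symmetry; read row by row, an unreduced
   tridiagonal matrix then propagates w_1 = 0 to all of w. *)

lemma index_mult_mat_vec_sum:
  assumes "A \<in> carrier_mat n m" and "x \<in> carrier_vec m" and "i < n"
  shows "(A *\<^sub>v x) $ i = (\<Sum>j<m. A $$ (i, j) * x $ j)"
  using assms by (auto simp: scalar_prod_def lessThan_atLeast0 intro!: sum.cong)

lemma smult_one_mult_mat_vec:
  fixes d :: "'a::comm_ring_1"
  assumes "y \<in> carrier_vec n"
  shows "(d \<cdot>\<^sub>m 1\<^sub>m n) *\<^sub>v y = d \<cdot>\<^sub>v y"
  using assms
  by (intro eq_vecI) (auto simp: scalar_prod_def mult.assoc if_distrib[where f = "\<lambda>t. t * _"]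
      sum_distrib_left[symmetric] cong: if_cong)

lemma conjugate_of_real_mult_mat_vec:
  fixes T :: "real mat"
  assumes "T \<in> carrier_mat n m" and "v \<in> carrier_vec m"
  shows "conjugate (map_mat complex_of_real T *\<^sub>v v) = map_mat complex_of_real T *\<^sub>v conjugate v"
  using assms by (auto simp: scalar_prod_def sum_conjugate conjugate_dist_mul)

lemma real_symmetric_has_eigenvalue:
  fixes T :: "real mat"
  assumes T: "T \<in> carrier_mat k k" and sym: "transpose_mat T = T" and k: "0 < k"
  obtains e where "eigenvalue T e"
proof -
  let ?C = "map_mat complex_of_real T"
  have C: "?C \<in> carrier_mat k k" using T by simp
  obtain l v where v: "v \<in> carrier_vec k" "v \<noteq> 0\<^sub>v k" and Cv: "?C *\<^sub>v v = l \<cdot>\<^sub>v v"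
    using spectrum_non_empty[OF C k] C by (auto simp: spectrum_def eigenvalue_def eigenvector_def)
  have "l * (v \<bullet>c v) = (?C *\<^sub>v v) \<bullet>c v"
    using v by (simp add: Cv)
  also have "\<dots> = conjugate v \<bullet> (?C *\<^sub>v v)"
    using C v by (simp add: comm_scalar_prod[of _ k])
  also have "\<dots> = (?C *\<^sub>v conjugate v) \<bullet> v"
    using transpose_vec_mult_scalar[OF C v(1), of "conjugate v"] v
    by (simp add: map_mat_transpose sym)
  also have "\<dots> = v \<bullet>c (?C *\<^sub>v v)"
    using C v by (simp add: conjugate_of_real_mult_mat_vec[OF T] comm_scalar_prod[of _ k])
  also have "\<dots> = cnj l * (v \<bullet>c v)"
    using v by (simp add: Cv conjugate_smult_vec)
  finally have "l = cnj l"
    using v conjugate_square_eq_0_vec[OF v(1)] by simp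
  then have "l = of_real (Re l)"
    by (metis Reals_cnj_iff Reals_cases Re_complex_of_real)
  then have "eigenvalue ?C (of_real (Re l))"
    using v Cv C by (auto simp: eigenvalue_def eigenvector_def)
  then have "eigenvalue T (Re l)"
    by (simp add: eigenvalue_root_char_poly[OF T] eigenvalue_root_char_poly[OF C]
        of_real_hom.char_poly_hom[OF T])
  then show thesis by (rule that)
qed

lemma isCont_det:
  fixes F :: "'a::t2_space \<Rightarrow> 'b::real_normed_field mat"
  assumes F: "\<And>x. F x \<in> carrier_mat n n"
    and entries: "\<And>i j. i < n \<Longrightarrow> j < n \<Longrightarrow> isCont (\<lambda>x. F x $$ (i, j)) a"
  shows "isCont (\<lambda>x. det (F x)) a"
proof -
  have "(\<lambda>x. det (F x)) =
      (\<lambda>x. \<Sum>p | p permutes {0..<n}. of_int (sign p) * (\<Prod>i = 0..<n. F x $$ (i, p i)))"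
    by (simp add: det_def'[OF F])
  moreover have "p i < n" if "p permutes {0..<n}" "i \<in> {0..<n}" for p i
    using that permutes_in_image by fastforce
  ultimately show ?thesis
    by (simp only:) (intro continuous_intros entries; simp)
qed

lemma isCont_cofactor:
  fixes F :: "'a::t2_space \<Rightarrow> 'b::real_normed_field mat"
  assumes F: "\<And>x. F x \<in> carrier_mat n n"
    and entries: "\<And>i j. i < n \<Longrightarrow> j < n \<Longrightarrow> isCont (\<lambda>x. F x $$ (i, j)) a"
  shows "isCont (\<lambda>x. cofactor (F x) i j) a"
  unfolding cofactor_def
proof (intro continuous_intros isCont_det[where n = "n - 1"])
  show "mat_delete (F x) i j \<in> carrier_mat (n - 1) (n - 1)" for x
    using F by (rule mat_delete_carrier)
  fix i' j' assume "i' < n - 1" "j' < n - 1"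
  then have "mat_delete (F x) i j $$ (i', j') = F x $$ (insert_index i i', insert_index j j')" for x
    using F[of x] by (simp add: mat_delete_def insert_index_def)
  moreover have "insert_index i i' < n" "insert_index j j' < n"
    using \<open>i' < n - 1\<close> \<open>j' < n - 1\<close> by (auto simp: insert_index_def)
  ultimately show "isCont (\<lambda>x. mat_delete (F x) i j $$ (i', j')) a"
    by (simp add: entries)
qed

lemma mult_mat_vec_adj_mat:
  fixes A :: "'a::comm_ring_1 mat"
  assumes A: "A \<in> carrier_mat n n" and y: "y \<in> carrier_vec n"
  shows "A *\<^sub>v (adj_mat A *\<^sub>v y) = det A \<cdot>\<^sub>v y"
proof -
  have "A *\<^sub>v (adj_mat A *\<^sub>v y) = (A * adj_mat A) *\<^sub>v y"
    using A y adj_mat(1)[OF A] by simp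
  also have "\<dots> = (det A \<cdot>\<^sub>m 1\<^sub>m n) *\<^sub>v y"
    by (simp add: adj_mat(2)[OF A])
  also have "\<dots> = det A \<cdot>\<^sub>v y"
    using y by (rule smult_one_mult_mat_vec)
  finally show ?thesis .
qed

lemma scalar_prod_self_nonneg: "0 \<le> (x :: real vec) \<bullet> x"
  by (simp add: scalar_prod_def sum_nonneg)

lemma vnorm_square: "vnorm x ^ 2 = x \<bullet> x"
  by (simp add: vnorm_def scalar_prod_self_nonneg)

lemma abs_index_le_vnorm:
  assumes "i < dim_vec x"
  shows "\<bar>x $ i\<bar> \<le> vnorm x"
proof -
  have "(x $ i)\<^sup>2 \<le> x \<bullet> x"
    using assms by (auto simp: scalar_prod_def power2_eq_square intro!: member_le_sum)
  then show ?thesis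
    unfolding vnorm_def by (metis real_sqrt_abs real_sqrt_le_mono)
qed

lemma vnorm_pos:
  assumes "v \<in> carrier_vec n" and "v \<noteq> 0\<^sub>v n"
  shows "0 < vnorm v"
  using conjugate_square_greater_0_vec[OF assms(1)] assms(2) by (simp add: vnorm_def)

definition entry_abs_sum :: "real mat \<Rightarrow> real" where
  "entry_abs_sum A = (\<Sum>i<dim_row A. \<Sum>j<dim_col A. \<bar>A $$ (i, j)\<bar>)"

lemma abs_quadratic_form_le:
  fixes A :: "real mat"
  assumes A: "A \<in> carrier_mat n n" and x: "x \<in> carrier_vec n"
  shows "\<bar>x \<bullet> (A *\<^sub>v x)\<bar> \<le> entry_abs_sum A * (x \<bullet> x)"
proof -
  have square_le: "(x $ i)\<^sup>2 \<le> x \<bullet> x" if "i < n" for i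
    using that x by (auto simp: scalar_prod_def power2_eq_square intro!: member_le_sum)
  have product_le: "\<bar>x $ i\<bar> * \<bar>x $ j\<bar> \<le> x \<bullet> x" if "i < n" "j < n" for i j
  proof -
    have "2 * \<bar>x $ i\<bar> * \<bar>x $ j\<bar> \<le> \<bar>x $ i\<bar>\<^sup>2 + \<bar>x $ j\<bar>\<^sup>2"
      by (rule sum_squares_bound)
    then show ?thesis
      using square_le[OF that(1)] square_le[OF that(2)] by simp
  qed
  have "x \<bullet> (A *\<^sub>v x) = (\<Sum>i<n. \<Sum>j<n. A $$ (i, j) * (x $ i * x $ j))"
    using A x by (simp add: scalar_prod_def sum_distrib_left lessThan_atLeast0 algebra_simps)
  also have "\<bar>\<dots>\<bar> \<le> (\<Sum>i<n. \<Sum>j<n. \<bar>A $$ (i, j) * (x $ i * x $ j)\<bar>)"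
    by (rule order_trans[OF sum_abs sum_mono[OF sum_abs]])
  also have "\<dots> \<le> (\<Sum>i<n. \<Sum>j<n. \<bar>A $$ (i, j)\<bar> * (x \<bullet> x))"
    unfolding abs_mult by (intro sum_mono mult_left_mono product_le) auto
  also have "\<dots> = entry_abs_sum A * (x \<bullet> x)"
    using A by (simp add: entry_abs_sum_def sum_distrib_right)
  finally show ?thesis .
qed

lemma shifted_system_norm_bound:
  fixes T :: "real mat"
  assumes T: "T \<in> carrier_mat k k" and k: "0 < k" and x: "x \<in> carrier_vec k" and c: "0 \<le> c"
    and sol: "(T - \<mu> \<cdot>\<^sub>m 1\<^sub>m k) *\<^sub>v x = - (c \<cdot>\<^sub>v unit_vec k 0)"
  shows "(- \<mu> - entry_abs_sum T) * (x \<bullet> x) \<le> c * vnorm x"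
proof -
  have "x \<bullet> (T *\<^sub>v x) - \<mu> * (x \<bullet> x) = x \<bullet> ((T - \<mu> \<cdot>\<^sub>m 1\<^sub>m k) *\<^sub>v x)"
    using T x by (simp add: minus_mult_distrib_mat_vec[of _ k k] scalar_prod_minus_distrib[of _ k]
        smult_one_mult_mat_vec)
  also have "\<dots> = - c * x $ 0"
    using x k by (simp add: sol)
  finally have identity: "x \<bullet> (T *\<^sub>v x) - \<mu> * (x \<bullet> x) = - c * x $ 0" .
  have "\<bar>x \<bullet> (T *\<^sub>v x)\<bar> \<le> entry_abs_sum T * (x \<bullet> x)"
    using T x by (rule abs_quadratic_form_le)
  then have quadratic: "- (entry_abs_sum T * (x \<bullet> x)) \<le> x \<bullet> (T *\<^sub>v x)"
    by linarith
  have "- x $ 0 \<le> vnorm x"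
    using abs_index_le_vnorm[of 0 x] x k by simp
  then have linear: "c * (- x $ 0) \<le> c * vnorm x"
    using c by (rule mult_left_mono)
  have "(- \<mu> - entry_abs_sum T) * (x \<bullet> x) = - (\<mu> * (x \<bullet> x)) - entry_abs_sum T * (x \<bullet> x)"
    by (simp add: left_diff_distrib)
  with identity quadratic linear show ?thesis
    by simp
qed

lemma rLGopt_feasible_lower_bound:
  fixes T :: "real mat"
  assumes T: "T \<in> carrier_mat k k" and k: "0 < k" and c: "0 \<le> c" and \<gamma>: "0 < \<gamma>"
    and feasible: "rLGopt_feasible T c \<gamma> \<mu> x"
  shows "- entry_abs_sum T - c / \<gamma> \<le> \<mu>"
proof -
  have x: "x \<in> carrier_vec k" "vnorm x = \<gamma>"
    and sol: "(T - \<mu> \<cdot>\<^sub>m 1\<^sub>m k) *\<^sub>v x = - (c \<cdot>\<^sub>v unit_vec k 0)"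
    using feasible T by (auto simp: rLGopt_feasible_def)
  have "(- \<mu> - entry_abs_sum T) * \<gamma> * \<gamma> \<le> c * \<gamma>"
    using shifted_system_norm_bound[OF T k x(1) c sol] vnorm_square[of x]
    by (simp add: x(2) power2_eq_square mult.assoc)
  then have "- \<mu> - entry_abs_sum T \<le> c / \<gamma>"
    using \<gamma> by (simp add: pos_le_divide_eq)
  then show ?thesis by simp
qed

lemma shifted_system_norm_less:
  fixes T :: "real mat"
  assumes T: "T \<in> carrier_mat k k" and k: "0 < k" and x: "x \<in> carrier_vec k"
    and c: "0 \<le> c" and \<gamma>: "0 < \<gamma>" and \<mu>: "\<mu> < - entry_abs_sum T - c / \<gamma>"
    and sol: "(T - \<mu> \<cdot>\<^sub>m 1\<^sub>m k) *\<^sub>v x = - (c \<cdot>\<^sub>v unit_vec k 0)"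
  shows "vnorm x < \<gamma>"
proof (rule ccontr)
  let ?r = "vnorm x"
  assume "\<not> ?r < \<gamma>"
  then have r: "\<gamma> \<le> ?r" "0 < ?r" using \<gamma> by auto
  have "c = c / \<gamma> * \<gamma>"
    using \<gamma> by simp
  also have "\<dots> \<le> c / \<gamma> * ?r"
    using r c \<gamma> by (intro mult_left_mono) auto
  also have "\<dots> < (- \<mu> - entry_abs_sum T) * ?r"
    using \<mu> r by (intro mult_strict_right_mono) auto
  finally have "c * ?r < (- \<mu> - entry_abs_sum T) * ?r * ?r"
    using r by (simp add: mult.commute)
  moreover have "(- \<mu> - entry_abs_sum T) * ?r * ?r \<le> c * ?r"
    using shifted_system_norm_bound[OF T k x c sol] vnorm_square[of x]
    by (simp add: power2_eq_square mult.assoc)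
  ultimately show False by simp
qed

(* x(mu) = -c (T - mu I)^-1 e_1, written with the adjugate so that its components are visibly
   continuous in mu; where T - mu I is singular, division by zero makes it the zero vector. *)
definition shifted_solution :: "real mat \<Rightarrow> real \<Rightarrow> real \<Rightarrow> real vec" where
  "shifted_solution T c \<mu> =
    (let A = T - \<mu> \<cdot>\<^sub>m 1\<^sub>m (dim_row T)
     in (- c / det A) \<cdot>\<^sub>v (adj_mat A *\<^sub>v unit_vec (dim_row T) 0))"

context
  fixes T :: "real mat" and k :: nat
  assumes T: "T \<in> carrier_mat k k"
begin

lemma shift_carrier [simp]: "T - \<mu> \<cdot>\<^sub>m 1\<^sub>m k \<in> carrier_mat k k"
  by (simp add: minus_carrier_mat)

lemma shifted_solution_carrier: "shifted_solution T c \<mu> \<in> carrier_vec k"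
proof -
  have "adj_mat (T - \<mu> \<cdot>\<^sub>m 1\<^sub>m k) *\<^sub>v unit_vec k 0 \<in> carrier_vec k"
    using adj_mat(1)[OF shift_carrier] by (rule mult_mat_vec_carrier) simp
  then show ?thesis
    using T by (simp add: shifted_solution_def Let_def)
qed

lemma index_shifted_solution:
  assumes "i < k"
  shows "shifted_solution T c \<mu> $ i = - c / det (T - \<mu> \<cdot>\<^sub>m 1\<^sub>m k) * cofactor (T - \<mu> \<cdot>\<^sub>m 1\<^sub>m k) 0 i"
  using assms T by (simp add: shifted_solution_def Let_def adj_mat_def)

lemma shifted_solution_solves:
  assumes "det (T - \<mu> \<cdot>\<^sub>m 1\<^sub>m k) \<noteq> 0"
  shows "(T - \<mu> \<cdot>\<^sub>m 1\<^sub>m k) *\<^sub>v shifted_solution T c \<mu> = - (c \<cdot>\<^sub>v unit_vec k 0)"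
proof -
  let ?A = "T - \<mu> \<cdot>\<^sub>m 1\<^sub>m k"
  have A: "?A \<in> carrier_mat k k" by simp
  have "?A *\<^sub>v shifted_solution T c \<mu> = (- c / det ?A) \<cdot>\<^sub>v (?A *\<^sub>v (adj_mat ?A *\<^sub>v unit_vec k 0))"
    using T adj_mat(1)[OF A] by (simp add: shifted_solution_def Let_def mult_mat_vec[of _ k k])
  also have "\<dots> = (- c / det ?A) \<cdot>\<^sub>v (det ?A \<cdot>\<^sub>v unit_vec k 0)"
    by (simp add: mult_mat_vec_adj_mat[OF A])
  also have "\<dots> = - (c \<cdot>\<^sub>v unit_vec k 0)"
    using assms by (intro eq_vecI) auto
  finally show ?thesis .
qed

lemma isCont_shift_index:
  assumes "i < k" and "j < k"
  shows "isCont (\<lambda>\<nu>. (T - \<nu> \<cdot>\<^sub>m 1\<^sub>m k) $$ (i, j)) \<mu>"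
  using assms T by simp

lemma isCont_det_shift: "isCont (\<lambda>\<nu>. det (T - \<nu> \<cdot>\<^sub>m 1\<^sub>m k)) \<mu>"
  by (intro isCont_det[where n = k] isCont_shift_index) simp_all

lemma isCont_vnorm_shifted_solution:
  assumes "det (T - \<mu> \<cdot>\<^sub>m 1\<^sub>m k) \<noteq> 0"
  shows "isCont (\<lambda>\<nu>. vnorm (shifted_solution T c \<nu>)) \<mu>"
proof -
  have "vnorm (shifted_solution T c \<nu>) =
      sqrt (\<Sum>i<k. (- c / det (T - \<nu> \<cdot>\<^sub>m 1\<^sub>m k) * cofactor (T - \<nu> \<cdot>\<^sub>m 1\<^sub>m k) 0 i)\<^sup>2)" for \<nu>
    using shifted_solution_carrier[of c \<nu>]
    by (simp add: vnorm_def scalar_prod_def lessThan_atLeast0 power2_eq_square index_shifted_solution)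
  then show ?thesis
    using assms
    by (simp only:) (intro continuous_intros isCont_det_shift isCont_cofactor[where n = k]
        isCont_shift_index; simp)
qed

end

lemma symmetric_mult_self_kernel:
  fixes A :: "real mat"
  assumes A: "A \<in> carrier_mat n n" and sym: "transpose_mat A = A" and w: "w \<in> carrier_vec n"
    and kernel: "(A * A) *\<^sub>v w = 0\<^sub>v n"
  shows "A *\<^sub>v w = 0\<^sub>v n"
proof -
  have Aw: "A *\<^sub>v w \<in> carrier_vec n"
    using A w by simp
  have "(A *\<^sub>v w) \<bullet> (A *\<^sub>v w) = w \<bullet> (A *\<^sub>v (A *\<^sub>v w))"
    using transpose_vec_mult_scalar[OF A Aw w] by (simp add: sym)
  also have "\<dots> = w \<bullet> ((A * A) *\<^sub>v w)"
    using A w by simp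
  also have "\<dots> = 0"
    using w by (simp add: kernel)
  finally show ?thesis
    using conjugate_square_eq_0_vec[OF Aw] by simp
qed

lemma eigenvalue_iff_det_shift:
  fixes T :: "'a::field mat"
  assumes "T \<in> carrier_mat n n"
  shows "eigenvalue T e \<longleftrightarrow> det (T - e \<cdot>\<^sub>m 1\<^sub>m n) = 0"
proof -
  have "char_matrix T e = T - e \<cdot>\<^sub>m 1\<^sub>m n"
    using assms by (intro eq_matI) (auto simp: char_matrix_def)
  then show ?thesis
    using eigenvalue_det[OF assms] by simp
qed

lemma
  fixes T :: "real mat"
  assumes T: "T \<in> carrier_mat k k" and sym: "transpose_mat T = T" and k: "0 < k"
  shows eigenvalue_lambda_min: "eigenvalue T (lambda_min T)"
    and lambda_min_le: "eigenvalue T e \<Longrightarrow> lambda_min T \<le> e"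
proof -
  have finite: "finite {e. eigenvalue T e}"
    using card_finite_spectrum(1)[OF T] by (simp add: spectrum_def)
  obtain e' where "eigenvalue T e'"
    using real_symmetric_has_eigenvalue[OF T sym k] .
  then have "{e. eigenvalue T e} \<noteq> {}" by blast
  from Min_in[OF finite this] show "eigenvalue T (lambda_min T)"
    by (simp add: lambda_min_def)
  show "eigenvalue T e \<Longrightarrow> lambda_min T \<le> e"
    using Min_le[OF finite] by (simp add: lambda_min_def)
qed

locale unreduced_sym_tridiagonal =
  fixes T :: "'a::idom mat" and k :: nat
  assumes carrier: "T \<in> carrier_mat k k"
    and symmetric: "transpose_mat T = T"
    and band: "\<And>i j. j < k \<Longrightarrow> Suc i < j \<Longrightarrow> T $$ (i, j) = 0"
    and subdiagonal_nonzero: "\<And>i. Suc i < k \<Longrightarrow> T $$ (Suc i, i) \<noteq> 0"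
begin

lemma symmetric_index: "i < k \<Longrightarrow> j < k \<Longrightarrow> T $$ (j, i) = T $$ (i, j)"
  by (metis carrier carrier_matD index_transpose_mat(1) symmetric)

lemma band_lower:
  assumes "i < k" and "Suc j < i"
  shows "T $$ (i, j) = 0"
proof -
  have "T $$ (i, j) = T $$ (j, i)"
    using assms symmetric_index[of j i] by simp
  also have "\<dots> = 0"
    using assms by (intro band)
  finally show ?thesis .
qed

lemma superdiagonal_nonzero: "Suc i < k \<Longrightarrow> T $$ (i, Suc i) \<noteq> 0"
  using subdiagonal_nonzero symmetric_index by (metis Suc_lessD)

lemma shift: "unreduced_sym_tridiagonal (T - \<mu> \<cdot>\<^sub>m 1\<^sub>m k) k"
proof
  show "T - \<mu> \<cdot>\<^sub>m 1\<^sub>m k \<in> carrier_mat k k"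
    by (simp add: minus_carrier_mat)
  show "transpose_mat (T - \<mu> \<cdot>\<^sub>m 1\<^sub>m k) = T - \<mu> \<cdot>\<^sub>m 1\<^sub>m k"
    using carrier symmetric_index by (intro eq_matI) auto
  show "(T - \<mu> \<cdot>\<^sub>m 1\<^sub>m k) $$ (i, j) = 0" if "j < k" and "Suc i < j" for i j
    using that carrier band by simp
  show "(T - \<mu> \<cdot>\<^sub>m 1\<^sub>m k) $$ (Suc i, i) \<noteq> 0" if "Suc i < k" for i
    using that carrier subdiagonal_nonzero by simp
qed

lemma kernel_vec_eq_zero_if_first_zero:
  assumes w: "w \<in> carrier_vec k" and kernel: "T *\<^sub>v w = 0\<^sub>v k" and first: "w $ 0 = 0"
  shows "w = 0\<^sub>v k"
proof -
  have "w $ j = 0" if "j < k" for j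
    using that
  proof (induction j rule: less_induct)
    case (less j)
    show ?case
    proof (cases j)
      case 0
      then show ?thesis using first by simp
    next
      case (Suc i)
      have "0 = (T *\<^sub>v w) $ i"
        using kernel less.prems Suc by simp
      also have "\<dots> = (\<Sum>l<k. T $$ (i, l) * w $ l)"
        using carrier w less.prems Suc by (intro index_mult_mat_vec_sum) auto
      also have "\<dots> = (\<Sum>l<k. if l = Suc i then T $$ (i, Suc i) * w $ Suc i else 0)"
      proof (intro sum.cong refl)
        fix l assume "l \<in> {..<k}"
        consider "l < j" | "l = j" | "j < l" by linarith
        then show "T $$ (i, l) * w $ l = (if l = Suc i then T $$ (i, Suc i) * w $ Suc i else 0)"
          using less.IH less.prems Suc \<open>l \<in> {..<k}\<close> band[of l i] by cases auto
      qed
      also have "\<dots> = T $$ (i, Suc i) * w $ j"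
        using less.prems Suc by simp
      finally show ?thesis
        using superdiagonal_nonzero less.prems Suc by simp
    qed
  qed
  then show ?thesis
    using w by (intro eq_vecI) auto
qed

lemma cofactor_first_row_last_column:
  assumes "0 < k"
  shows "cofactor T 0 (k - 1) = (-1) ^ (k - 1) * (\<Prod>i<k - 1. T $$ (Suc i, i))"
proof -
  let ?B = "mat_delete T 0 (k - 1)"
  have B: "?B \<in> carrier_mat (k - 1) (k - 1)"
    using carrier by (rule mat_delete_carrier)
  have B_index: "?B $$ (a, b) = T $$ (Suc a, b)" if "a < k - 1" "b < k - 1" for a b
    using that carrier by (simp add: mat_delete_def)
  have "upper_triangular ?B"
  proof
    fix a b assume "b < a" and "a < dim_row ?B"
    then have "a < k - 1" and "b < k - 1"
      using B by auto
    then have "?B $$ (a, b) = T $$ (Suc a, b)"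
      by (rule B_index)
    also have "\<dots> = 0"
      using \<open>a < k - 1\<close> \<open>b < a\<close> by (intro band_lower) auto
    finally show "?B $$ (a, b) = 0" .
  qed
  then have "det ?B = prod_list (diag_mat ?B)"
    using B by (rule det_upper_triangular)
  also have "diag_mat ?B = map (\<lambda>i. T $$ (Suc i, i)) [0..<k - 1]"
    using B B_index by (auto simp: diag_mat_def)
  also have "prod_list \<dots> = (\<Prod>i<k - 1. T $$ (Suc i, i))"
    by (simp add: prod.distinct_set_conv_list[symmetric] lessThan_atLeast0)
  finally show ?thesis
    by (simp add: cofactor_def)
qed

end

locale real_unreduced_sym_tridiagonal = unreduced_sym_tridiagonal T k for T :: "real mat" and k
begin

lemma rQEP_feasible_first_component_nonzero:
  assumes feasible: "rQEP_feasible T c \<gamma> \<mu> w"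
  shows "unit_vec k 0 \<bullet> w \<noteq> 0"
proof
  assume first: "unit_vec k 0 \<bullet> w = 0"
  let ?A = "T - \<mu> \<cdot>\<^sub>m 1\<^sub>m k"
  have A: "?A \<in> carrier_mat k k"
    using carrier by (simp add: minus_carrier_mat)
  have w: "w \<in> carrier_vec k" "w \<noteq> 0\<^sub>v k"
    and square: "(?A ^\<^sub>m 2) *\<^sub>v w = (c\<^sup>2 / \<gamma>\<^sup>2) \<cdot>\<^sub>v ((unit_vec k 0 \<bullet> w) \<cdot>\<^sub>v unit_vec k 0)"
    using feasible carrier by (auto simp: rQEP_feasible_def)
  have "0 < k"
  proof (rule ccontr)
    assume "\<not> 0 < k"
    then have "w = 0\<^sub>v k"
      using w(1) by (intro eq_vecI) auto
    with w(2) show False ..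
  qed
  have "?A ^\<^sub>m 2 = ?A * ?A"
    using A by (simp add: numeral_2_eq_2)
  moreover have "(c\<^sup>2 / \<gamma>\<^sup>2) \<cdot>\<^sub>v (0 \<cdot>\<^sub>v unit_vec k 0) = 0\<^sub>v k"
    by (intro eq_vecI) auto
  ultimately have "(?A * ?A) *\<^sub>v w = 0\<^sub>v k"
    using square first by simp
  then have "?A *\<^sub>v w = 0\<^sub>v k"
    using symmetric_mult_self_kernel[OF A _ w(1)] unreduced_sym_tridiagonal.symmetric[OF shift] by simp
  moreover have "w $ 0 = 0"
    using first w \<open>0 < k\<close> by simp
  ultimately have "w = 0\<^sub>v k"
    using unreduced_sym_tridiagonal.kernel_vec_eq_zero_if_first_zero[OF shift w(1)] by simp
  with w show False by simp
qed

lemma not_rLGopt_hard_case: "\<not> rLGopt_hard_case T c \<gamma>"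
  using rQEP_feasible_first_component_nonzero carrier by (auto simp: rLGopt_hard_case_def)

lemma cofactor_shift_first_row_last_column:
  assumes "0 < k"
  shows "cofactor (T - \<mu> \<cdot>\<^sub>m 1\<^sub>m k) 0 (k - 1) = (-1) ^ (k - 1) * (\<Prod>i<k - 1. T $$ (Suc i, i))"
proof -
  have "(\<Prod>i<k - 1. (T - \<mu> \<cdot>\<^sub>m 1\<^sub>m k) $$ (Suc i, i)) = (\<Prod>i<k - 1. T $$ (Suc i, i))"
    using carrier by (intro prod.cong) auto
  then show ?thesis
    using unreduced_sym_tridiagonal.cofactor_first_row_last_column[OF shift assms] by simp
qed

lemma vnorm_shifted_solution_unbounded:
  assumes k: "0 < k" and c: "0 < c" and \<gamma>: "0 < \<gamma>"
    and singular: "det (T - \<theta> \<cdot>\<^sub>m 1\<^sub>m k) = 0"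
    and regular: "\<And>\<mu>. \<mu> < \<theta> \<Longrightarrow> det (T - \<mu> \<cdot>\<^sub>m 1\<^sub>m k) \<noteq> 0"
  obtains \<mu> where "\<mu> < \<theta>" and "\<gamma> < vnorm (shifted_solution T c \<mu>)"
proof -
  define P where "P = (\<Prod>i<k - 1. T $$ (Suc i, i))"
  have "P \<noteq> 0"
    using subdiagonal_nonzero by (simp add: P_def)
  then have r: "0 < c * \<bar>P\<bar> / \<gamma>"
    using c \<gamma> by simp
  have "(\<lambda>\<mu>. det (T - \<mu> \<cdot>\<^sub>m 1\<^sub>m k)) \<midarrow>\<theta>\<rightarrow> 0"
    using isCont_det_shift[OF carrier, of \<theta>] singular by (simp add: isCont_def)
  from LIM_D[OF this r] obtain \<delta> where "0 < \<delta>"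
    and small: "\<And>\<mu>. \<mu> \<noteq> \<theta> \<and> norm (\<mu> - \<theta>) < \<delta> \<longrightarrow> norm (det (T - \<mu> \<cdot>\<^sub>m 1\<^sub>m k) - 0) < c * \<bar>P\<bar> / \<gamma>"
    by blast
  define \<mu> where "\<mu> = \<theta> - \<delta> / 2"
  have "\<mu> < \<theta>"
    using \<open>0 < \<delta>\<close> by (simp add: \<mu>_def)
  let ?d = "det (T - \<mu> \<cdot>\<^sub>m 1\<^sub>m k)"
  have d: "0 < \<bar>?d\<bar>" "\<bar>?d\<bar> < c * \<bar>P\<bar> / \<gamma>"
    using regular[OF \<open>\<mu> < \<theta>\<close>] small[of \<mu>] \<open>0 < \<delta>\<close> by (auto simp: \<mu>_def)
  have "\<gamma> < c * \<bar>P\<bar> / \<bar>?d\<bar>"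
    using d \<gamma> by (simp add: field_simps)
  also have "\<dots> = \<bar>shifted_solution T c \<mu> $ (k - 1)\<bar>"
    using index_shifted_solution[OF carrier, of "k - 1" c \<mu>]
      cofactor_shift_first_row_last_column[OF k, of \<mu>] k c P_def
    by (simp add: abs_mult)
  also have "\<dots> \<le> vnorm (shifted_solution T c \<mu>)"
    using k shifted_solution_carrier[OF carrier, of c \<mu>] by (intro abs_index_le_vnorm) auto
  finally show thesis
    using \<open>\<mu> < \<theta>\<close> that by blast
qed

lemma rLGopt_feasible_below_lambda_min:
  assumes k: "0 < k" and c: "0 < c" and \<gamma>: "0 < \<gamma>"
  obtains \<mu> x where "\<mu> < lambda_min T" and "rLGopt_feasible T c \<gamma> \<mu> x"
proof -
  let ?lmin = "lambda_min T" and ?x = "shifted_solution T c"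
  have regular: "det (T - \<mu> \<cdot>\<^sub>m 1\<^sub>m k) \<noteq> 0" if "\<mu> < ?lmin" for \<mu>
    using that lambda_min_le[OF carrier symmetric k] eigenvalue_iff_det_shift[OF carrier] by force
  have singular: "det (T - ?lmin \<cdot>\<^sub>m 1\<^sub>m k) = 0"
    using eigenvalue_lambda_min[OF carrier symmetric k] eigenvalue_iff_det_shift[OF carrier] by simp
  obtain \<mu>\<^sub>1 where "\<mu>\<^sub>1 < ?lmin" and large: "\<gamma> < vnorm (?x \<mu>\<^sub>1)"
    using vnorm_shifted_solution_unbounded[OF k c \<gamma> singular regular] by blast
  define \<mu>\<^sub>0 where "\<mu>\<^sub>0 = min \<mu>\<^sub>1 (- entry_abs_sum T - c / \<gamma> - 1)"
  have "\<mu>\<^sub>0 < ?lmin"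
    using \<open>\<mu>\<^sub>1 < ?lmin\<close> by (simp add: \<mu>\<^sub>0_def)
  have "\<mu>\<^sub>0 < - entry_abs_sum T - c / \<gamma>"
    by (simp add: \<mu>\<^sub>0_def)
  then have small: "vnorm (?x \<mu>\<^sub>0) < \<gamma>"
    using shifted_solution_solves[OF carrier regular[OF \<open>\<mu>\<^sub>0 < ?lmin\<close>]] c
    by (intro shifted_system_norm_less[OF carrier k shifted_solution_carrier[OF carrier] _ \<gamma>]) auto
  have "continuous_on {\<mu>\<^sub>0..\<mu>\<^sub>1} (\<lambda>\<mu>. vnorm (?x \<mu>))"
    using \<open>\<mu>\<^sub>1 < ?lmin\<close> regular
    by (intro continuous_at_imp_continuous_on ballI isCont_vnorm_shifted_solution[OF carrier]) auto
  then obtain \<mu> where "\<mu>\<^sub>0 \<le> \<mu>" "\<mu> \<le> \<mu>\<^sub>1" and "vnorm (?x \<mu>) = \<gamma>"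
    using IVT'[of "\<lambda>\<mu>. vnorm (?x \<mu>)" \<mu>\<^sub>0 \<gamma> \<mu>\<^sub>1] small large by (force simp: \<mu>\<^sub>0_def)
  moreover have "\<mu> < ?lmin"
    using \<open>\<mu> \<le> \<mu>\<^sub>1\<close> \<open>\<mu>\<^sub>1 < ?lmin\<close> by simp
  ultimately have "rLGopt_feasible T c \<gamma> \<mu> (?x \<mu>)"
    using carrier shifted_solution_carrier[OF carrier] shifted_solution_solves[OF carrier regular]
    by (simp add: rLGopt_feasible_def)
  with \<open>\<mu> < ?lmin\<close> show thesis
    by (rule that)
qed

lemma rLGopt_value_less_lambda_min:
  assumes k: "0 < k" and c: "0 < c" and \<gamma>: "0 < \<gamma>"
  shows "rLGopt_value T c \<gamma> < lambda_min T"
proof -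
  obtain \<mu> x where "\<mu> < lambda_min T" and feasible: "rLGopt_feasible T c \<gamma> \<mu> x"
    using rLGopt_feasible_below_lambda_min[OF k c \<gamma>] .
  have "bdd_below {\<mu>. \<exists>x. rLGopt_feasible T c \<gamma> \<mu> x}"
    using rLGopt_feasible_lower_bound[OF carrier k _ \<gamma>] c
    by (intro bdd_belowI[of _ "- entry_abs_sum T - c / \<gamma>"]) auto
  then have "rLGopt_value T c \<gamma> \<le> \<mu>"
    unfolding rLGopt_value_def using feasible by (intro cInf_lower) auto
  with \<open>\<mu> < lambda_min T\<close> show ?thesis
    by simp
qed

end

lemma lanczos_T_unreduced:
  assumes "\<forall>j \<in> {2..k}. lanczos_beta M b j \<noteq> 0"
  shows "real_unreduced_sym_tridiagonal (lanczos_T M b k) k"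
proof
  show "lanczos_T M b k \<in> carrier_mat k k"
    by (simp add: lanczos_T_def)
  show "transpose_mat (lanczos_T M b k) = lanczos_T M b k"
    by (intro eq_matI) (auto simp: lanczos_T_def)
  show "lanczos_T M b k $$ (i, j) = 0" if "j < k" and "Suc i < j" for i j
    using that by (simp add: lanczos_T_def)
  show "lanczos_T M b k $$ (Suc i, i) \<noteq> 0" if "Suc i < k" for i
    using that assms by (simp add: lanczos_T_def)
qed

theorem theorem3p1:
  fixes M :: "real mat" and b :: "real vec" and \<gamma> :: real and n k :: nat
  assumes "M \<in> carrier_mat n n" and "transpose_mat M = M"
    and "b \<in> carrier_vec n" and "b \<noteq> 0\<^sub>v n"
    and "\<gamma> > 0" and "k \<ge> 1"
    and "\<forall>j \<in> {2..k}. lanczos_beta M b j \<noteq> 0"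
  shows "rLGopt_value (lanczos_T M b k) (vnorm b) \<gamma> < lambda_min (lanczos_T M b k)
     \<and> \<not> rLGopt_hard_case (lanczos_T M b k) (vnorm b) \<gamma>"
proof -
  \<comment> \<open>T_k is symmetric tridiagonal whatever M is.\<close>
  interpret real_unreduced_sym_tridiagonal "lanczos_T M b k" k
    using assms(7) by (rule lanczos_T_unreduced)
  have "0 < vnorm b"
    using assms(3,4) by (rule vnorm_pos)
  then show ?thesis
    using assms(5,6) rLGopt_value_less_lambda_min not_rLGopt_hard_case by simp
qed

end
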